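(* Let $q\in(1,\infty)$, $a>0$, $0<s<\frac a{q-1}$, $\delta,\varrho>0$, $c_r\ge c_l>0$, $C_D>c_D>1$. Let $x\in b^s_{2,\infty}$ with $\|x\|_{b^s_{2,\infty}}\le\varrho$, let $g^\delta\in\mathbb Y$ with $\|g^\delta-Ax\|_{\mathbb Y}\le\delta$, $\alpha>0$ and $\hat x_\alpha\in R_\alpha(g^\delta)$. There is a constant $C>0$ independent of $x,\delta,\varrho$ such that whenever either $$c_l\varrho^{-\frac{qa}{s+a}}\delta^{\frac{(2-q)s+2a}{s+a}}\le\alpha\le c_r\varrho^{-\frac{qa}{s+a}}\delta^{\frac{(2-q)s+2a}{s+a}}\quad\text{or}\quad c_D\delta\le\|g^\delta-A\hat x_\alpha\|_{\mathbb Y}\le C_D\delta,$$ then $\|x-\hat x_\alpha\|_{b^0_{2,2}}\le C\varrho^{\frac a{s+a}}\delta^{\frac s{s+a}}$.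
   Context: Besov sequence spaces: $d\in\mathbb N$; $(\Lambda_j)_{j\in\mathbb N_0}$ finite sets with $2^{jd}\le|\Lambda_j|\le C_\Lambda2^{jd}$; $\Lambda:=\{(j,k):j\in\mathbb N_0,k\in\Lambda_j\}$. For $p,q\in(0,\infty]$, $s\in\mathbb R$, $b^s_{p,q}:=\{x\in\mathbb R^\Lambda:\|x\|_{b^s_{p,q}}<\infty\}$, $\|x\|^q_{b^s_{p,q}}:=\sum_{j}2^{jq(s+\frac d2-\frac dp)}(\sum_{k\in\Lambda_j}|x_{j,k}|^p)^{q/p}$ (usual modifications for $p$ or $q=\infty$). $\mathbb Y$ is a real Hilbert space and $A:b^{-a}_{2,2}\to\mathbb Y$ is bounded linear with $\frac1M\|x\|_{b^{-a}_{2,2}}\le\|Ax\|_{\mathbb Y}\le M\|x\|_{b^{-a}_{2,2}}$ for some $M\ge1$. Penalty $\mathcal R(x):=\frac1q\|x\|^q_{b^0_{2,q}}=\frac1q\sum_j(\sum_{k\in\Lambda_j}|x_{j,k}|^2)^{q/2}$ on $\mathbb X=b^0_{2,q}$; $R_\alpha(g):=\operatorname{argmin}_{x\in b^0_{2,q}}\big(\frac1{2\alpha}\|g-Ax\|_{\mathbb Y}^2+\mathcal R(x)\big)$. *)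

theory Defs
  imports "HOL-Analysis.Analysis"
begin

text \<open>Sequences indexed by \<Lambda> = {(j,k). k \<in> Lam j} are represented as functions
  x :: nat \<Rightarrow> 'k \<Rightarrow> real, required to vanish outside \<Lambda>.\<close>

definition on_Lambda :: "(nat \<Rightarrow> 'k set) \<Rightarrow> (nat \<Rightarrow> 'k \<Rightarrow> real) \<Rightarrow> bool" where
  "on_Lambda Lam x \<longleftrightarrow> (\<forall>j k. k \<notin> Lam j \<longrightarrow> x j k = 0)"

definition lp_norm :: "real \<Rightarrow> 'k set \<Rightarrow> ('k \<Rightarrow> real) \<Rightarrow> real" where
  "lp_norm p L y = (\<Sum>k\<in>L. \<bar>y k\<bar> powr p) powr (1 / p)"

definition besov_level :: "nat \<Rightarrow> (nat \<Rightarrow> 'k set) \<Rightarrow> real \<Rightarrow> real \<Rightarrow> (nat \<Rightarrow> 'k \<Rightarrow> real) \<Rightarrow> nat \<Rightarrow> real" where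
  "besov_level d Lam p s x j =
     2 powr (real j * (s + real d / 2 - real d / p)) * lp_norm p (Lam j) (x j)"

definition in_besov :: "nat \<Rightarrow> (nat \<Rightarrow> 'k set) \<Rightarrow> real \<Rightarrow> real \<Rightarrow> real \<Rightarrow> (nat \<Rightarrow> 'k \<Rightarrow> real) \<Rightarrow> bool" where
  "in_besov d Lam p q s x \<longleftrightarrow> summable (\<lambda>j. besov_level d Lam p s x j powr q)"

definition besov_norm :: "nat \<Rightarrow> (nat \<Rightarrow> 'k set) \<Rightarrow> real \<Rightarrow> real \<Rightarrow> real \<Rightarrow> (nat \<Rightarrow> 'k \<Rightarrow> real) \<Rightarrow> real" where
  "besov_norm d Lam p q s x = (\<Sum>j. besov_level d Lam p s x j powr q) powr (1 / q)"

definition in_besov_inf :: "nat \<Rightarrow> (nat \<Rightarrow> 'k set) \<Rightarrow> real \<Rightarrow> real \<Rightarrow> (nat \<Rightarrow> 'k \<Rightarrow> real) \<Rightarrow> bool" where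
  "in_besov_inf d Lam p s x \<longleftrightarrow> bdd_above (range (besov_level d Lam p s x))"

definition besov_norm_inf :: "nat \<Rightarrow> (nat \<Rightarrow> 'k set) \<Rightarrow> real \<Rightarrow> real \<Rightarrow> (nat \<Rightarrow> 'k \<Rightarrow> real) \<Rightarrow> real" where
  "besov_norm_inf d Lam p s x = (SUP j. besov_level d Lam p s x j)"

definition penalty :: "nat \<Rightarrow> (nat \<Rightarrow> 'k set) \<Rightarrow> real \<Rightarrow> (nat \<Rightarrow> 'k \<Rightarrow> real) \<Rightarrow> real" where
  "penalty d Lam q x = (1 / q) * besov_norm d Lam 2 q 0 x powr q"

definition tikhonov :: "nat \<Rightarrow> (nat \<Rightarrow> 'k set) \<Rightarrow> real \<Rightarrow> ((nat \<Rightarrow> 'k \<Rightarrow> real) \<Rightarrow> 'y::real_normed_vector)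
    \<Rightarrow> real \<Rightarrow> 'y \<Rightarrow> (nat \<Rightarrow> 'k \<Rightarrow> real) \<Rightarrow> real" where
  "tikhonov d Lam q A \<alpha> g x = (1 / (2 * \<alpha>)) * (norm (g - A x))\<^sup>2 + penalty d Lam q x"

definition R_alpha :: "nat \<Rightarrow> (nat \<Rightarrow> 'k set) \<Rightarrow> real \<Rightarrow> ((nat \<Rightarrow> 'k \<Rightarrow> real) \<Rightarrow> 'y::real_normed_vector)
    \<Rightarrow> real \<Rightarrow> 'y \<Rightarrow> (nat \<Rightarrow> 'k \<Rightarrow> real) set" where
  "R_alpha d Lam q A \<alpha> g =
     {xh. on_Lambda Lam xh \<and> in_besov d Lam 2 q 0 xh \<and>
          (\<forall>z. on_Lambda Lam z \<and> in_besov d Lam 2 q 0 z \<longrightarrow>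
               tikhonov d Lam q A \<alpha> g xh \<le> tikhonov d Lam q A \<alpha> g z)}"

end

theory Submission
  imports Defs
begin

(* Write x_j and xh_j for the l2-norms of the level-j blocks of x and of the minimiser xh, and
   put tau = (rho/delta)^(1/(s+a)); all level sums are split at the dyadic scale 2^J ~ tau.
   Minimality of xh gives the variational inequality <g - A xh, A z - A xh> <= alpha (R z - R xh).
   For z = x the penalty gap is at most delta^(q-1) tau^(qa) (k1 |A(x - xh)| + k2 delta): below J
   by the tangent bound for t^q and 2^(-ja) |(x - xh)_j| <= M |A(x - xh)| (a geometric sum since
   s (q - 1) < a), above J by the smoothness of x. Together with the noise bound, either parameter
   choice forces |A(x - xh)| <~ delta and alpha delta^(q-1) tau^(qa) >~ delta. Testing with xh with
   one level deleted shows that the levels of xh decay like 2^(-ja/(q-1)). The l2-error is then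
   bounded below J by 2^(ja) M |A(x - xh)| and above J by the decay of x and xh; both parts are
   O(delta tau^a) = O(rho^(a/(s+a)) delta^(s/(s+a))). *)

section \<open>Dyadic geometric sums\<close>

lemma two_powr_mult_eq_power: "(2::real) powr (real j * c) = (2 powr c) ^ j"
  by (simp add: powr_realpow[symmetric] powr_powr mult.commute)

lemma one_minus_two_powr_neg_pos: "c > 0 \<Longrightarrow> 1 - (2::real) powr (- c) > 0"
  using powr_less_mono[of "- c" 0 "2::real"] by simp

lemma power2_powr: "((x::real) powr c)\<^sup>2 = x powr (2 * c)"
  by (simp add: power2_eq_square powr_add[symmetric])

lemma dyadic_tail:
  fixes c e :: real assumes c: "c > 0"
  shows "summable (\<lambda>j. e * 2 powr (- (real j * c)))"
    and "(\<Sum>n. e * 2 powr (- (real (n + J) * c))) = e * 2 powr (- (real J * c)) / (1 - 2 powr (- c))"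
proof -
  have r: "norm ((2::real) powr (- c)) < 1"
    using powr_less_mono[of "- c" 0 "2::real"] c by simp
  have pow: "(2::real) powr (- (real j * c)) = (2 powr (- c)) ^ j" for j
    using two_powr_mult_eq_power[of j "- c"] by simp
  show "summable (\<lambda>j. e * 2 powr (- (real j * c)))"
    unfolding pow using summable_geometric[OF r] by (rule summable_mult)
  have shift: "(2::real) powr (- (real (n + J) * c)) = 2 powr (- (real J * c)) * (2 powr (- c)) ^ n" for n
    by (simp add: pow[symmetric] powr_add[symmetric] algebra_simps)
  show "(\<Sum>n. e * 2 powr (- (real (n + J) * c))) = e * 2 powr (- (real J * c)) / (1 - 2 powr (- c))"
    unfolding shift using suminf_mult[OF summable_geometric[OF r], of "e * 2 powr (- (real J * c))"]
      suminf_geometric[OF r] by (simp add: mult.assoc)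
qed

lemma dyadic_tail_le:
  fixes c e \<tau> :: real
  assumes c: "c > 0" and e: "e \<ge> 0" and \<tau>: "\<tau> > 0" "\<tau> \<le> 2 powr real J"
  shows "(\<Sum>n. e * 2 powr (- (real (n + J) * c))) \<le> e * \<tau> powr (- c) / (1 - 2 powr (- c))"
proof -
  have "(2::real) powr (- (real J * c)) = (2 powr real J) powr (- c)" by (simp add: powr_powr)
  also have "\<dots> \<le> \<tau> powr (- c)" using c \<tau> by (intro powr_mono2') auto
  finally show ?thesis
    unfolding dyadic_tail(2)[OF c] using e one_minus_two_powr_neg_pos[OF c]
    by (intro divide_right_mono mult_left_mono) auto
qed

lemma dyadic_square_tail_le:
  fixes b c \<tau> a :: real
  assumes c: "c > 0" and \<tau>: "\<tau> > 0" "\<tau> \<le> 2 powr real J"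
  shows "(\<Sum>n. 2 * (b * \<tau> powr (a + c))\<^sup>2 * 2 powr (- (real (n + J) * (2 * c))))
         \<le> 2 / (1 - 2 powr (- (2 * c))) * (b * \<tau> powr a)\<^sup>2"
proof -
  have "(\<Sum>n. 2 * (b * \<tau> powr (a + c))\<^sup>2 * 2 powr (- (real (n + J) * (2 * c))))
        \<le> 2 * (b * \<tau> powr (a + c))\<^sup>2 * \<tau> powr (- (2 * c)) / (1 - 2 powr (- (2 * c)))"
    using c \<tau> by (intro dyadic_tail_le) auto
  also have "(b * \<tau> powr (a + c))\<^sup>2 * \<tau> powr (- (2 * c)) = (b * \<tau> powr a)\<^sup>2"
    by (simp add: power_mult_distrib power2_powr powr_add[symmetric] algebra_simps)
  then have "2 * (b * \<tau> powr (a + c))\<^sup>2 * \<tau> powr (- (2 * c)) / (1 - 2 powr (- (2 * c)))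
      = 2 / (1 - 2 powr (- (2 * c))) * (b * \<tau> powr a)\<^sup>2"
    by (simp only: mult.assoc) simp
  finally show ?thesis .
qed

lemma dyadic_head_le:
  fixes c \<tau> :: real
  assumes c: "c > 0" and \<tau>: "\<tau> > 0" "J > 0 \<longrightarrow> 2 powr real J \<le> 2 * \<tau>"
  shows "(\<Sum>j<J. (2::real) powr (real j * c)) \<le> (2 * \<tau>) powr c / (2 powr c - 1)"
proof (cases "J = 0")
  case True
  moreover have "2 powr c > (1::real)" using c by simp
  ultimately show ?thesis using \<tau> by simp
next
  case False
  have gt1: "2 powr c > (1::real)" using c by simp
  have "(\<Sum>j<J. (2::real) powr (real j * c)) = ((2 powr c) ^ J - 1) / (2 powr c - 1)"
    unfolding two_powr_mult_eq_power using c by (intro geometric_sum) simp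
  also have "\<dots> \<le> (2 powr c) ^ J / (2 powr c - 1)" using gt1 by (simp add: divide_right_mono)
  also have "(2 powr c) ^ J = (2 powr real J) powr c"
    by (simp add: two_powr_mult_eq_power[symmetric] powr_powr mult.commute)
  also have "\<dots> \<le> (2 * \<tau>) powr c" using False \<tau> c by (intro powr_mono2) auto
  finally show ?thesis using gt1 by (simp add: divide_right_mono)
qed

lemma exists_dyadic_scale:
  fixes \<tau> :: real assumes \<tau>: "\<tau> > 0"
  obtains J :: nat where "\<tau> \<le> 2 powr real J" and "J > 0 \<longrightarrow> 2 powr real J \<le> 2 * \<tau>"
proof (cases "log 2 \<tau> \<le> 0")
  case True
  then have "\<tau> \<le> 1" using \<tau> by (simp add: log_le_zero_cancel_iff)
  then show ?thesis by (intro that[of 0]) simp_all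
next
  case False
  define J where "J = nat \<lceil>log 2 \<tau>\<rceil>"
  have J: "real J = of_int \<lceil>log 2 \<tau>\<rceil>" using False by (simp add: J_def)
  have "\<tau> = 2 powr (log 2 \<tau>)" using \<tau> by simp
  also have "\<dots> \<le> 2 powr real J" unfolding J by (intro powr_mono) auto
  finally have lower: "\<tau> \<le> 2 powr real J" .
  have "2 powr real J \<le> 2 powr (log 2 \<tau> + 1)" unfolding J by (intro powr_mono) linarith+
  also have "\<dots> = 2 * \<tau>" using \<tau> by (simp add: powr_add)
  finally show ?thesis using lower by (intro that) auto
qed

lemma suminf_le_split:
  fixes f lo hi :: "nat \<Rightarrow> real"
  assumes "summable f" and "summable hi"
    and "\<And>j. f j \<le> (if j < J then lo j else hi j)"
  shows "suminf f \<le> (\<Sum>j<J. lo j) + (\<Sum>n. hi (n + J))"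
proof -
  define g where "g j = (if j < J then lo j else hi j)" for j
  have "summable (\<lambda>n. g (n + J))" unfolding g_def using assms(2) by (simp add: summable_iff_shift)
  then have g: "summable g" by (simp add: summable_iff_shift)
  have "suminf f \<le> suminf g" using assms g by (intro suminf_le) (auto simp: g_def)
  also have "\<dots> = (\<Sum>n. g (n + J)) + (\<Sum>j<J. g j)" by (rule suminf_split_initial_segment[OF g])
  finally show ?thesis by (simp add: g_def)
qed

lemma dyadic_decay_powr:
  fixes u \<rho> s p :: real
  assumes "0 \<le> u" "u \<le> \<rho> * 2 powr (- (real j * s))" "p \<ge> 0"
  shows "u powr p \<le> \<rho> powr p * 2 powr (- (real j * (s * p)))"
proof -
  have "0 \<le> \<rho> * 2 powr (- (real j * s))" using assms(1,2) by linarith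
  then have "\<rho> \<ge> 0" by (simp add: zero_le_mult_iff)
  have "u powr p \<le> (\<rho> * 2 powr (- (real j * s))) powr p" using assms by (intro powr_mono2) auto
  also have "\<dots> = \<rho> powr p * 2 powr (- (real j * (s * p)))"
    using \<open>\<rho> \<ge> 0\<close> by (simp add: powr_mult powr_powr mult.assoc)
  finally show ?thesis .
qed

lemma powr_ge_tangent:
  fixes q c x :: real assumes q: "q \<ge> 1" and c: "c > 0" and x: "x \<ge> 0"
  shows "q * c powr (q - 1) * (x - c) \<le> x powr q - c powr q"
proof (cases "x = 0")
  case True
  have "c powr q = c powr (q - 1) * c" using c by (simp add: powr_diff)
  then show ?thesis using True q c by (simp add: algebra_simps)
next
  case False
  have "((\<lambda>x. x powr q) has_field_derivative q * c powr (q - 1)) (at c within {0<..})"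
    using has_real_derivative_powr[OF c] by (rule has_field_derivative_at_within)
  from convex_on_imp_above_tangent[OF powr_convex[OF q] _ _ _ this] c x False
  show ?thesis by (auto simp: interior_open)
qed

lemma powr_convex_comb_le:
  fixes q x y t :: real
  assumes q: "q \<ge> 1" and x: "x \<ge> 0" and y: "y \<ge> 0" and t: "0 \<le> t" "t \<le> 1"
  shows "((1 - t) * x + t * y) powr q \<le> (1 - t) * x powr q + t * y powr q"
proof (cases "(1 - t) * x + t * y = 0")
  case True
  then show ?thesis using t by simp
next
  case False
  define c where "c = (1 - t) * x + t * y"
  have "c \<ge> 0" using x y t by (simp add: c_def)
  with False have c: "c > 0" by (simp add: c_def)
  have "(1 - t) * (q * c powr (q - 1) * (x - c)) + t * (q * c powr (q - 1) * (y - c))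
        \<le> (1 - t) * (x powr q - c powr q) + t * (y powr q - c powr q)"
    using powr_ge_tangent[OF q c x] powr_ge_tangent[OF q c y] t by (intro add_mono mult_left_mono) auto
  moreover have "(1 - t) * (q * c powr (q - 1) * (x - c)) + t * (q * c powr (q - 1) * (y - c)) = 0"
    by (simp add: c_def algebra_simps)
  ultimately show ?thesis by (simp add: c_def algebra_simps)
qed

lemma powr_diff_div_le:
  fixes q x y :: real assumes q: "q \<ge> 1" and x: "x \<ge> 0" and y: "y \<ge> 0"
  shows "(x powr q - y powr q) / q \<le> x powr (q - 1) * \<bar>x - y\<bar>"
proof (cases "x = 0")
  case True
  then show ?thesis using q y by simp
next
  case False
  then have "x > 0" using x by simp
  from powr_ge_tangent[OF q this y]
  have "x powr q - y powr q \<le> q * (x powr (q - 1) * (x - y))" by (simp add: algebra_simps)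
  also have "\<dots> \<le> q * (x powr (q - 1) * \<bar>x - y\<bar>)" using q by (intro mult_left_mono) auto
  finally show ?thesis using q by (simp add: divide_le_eq mult.commute)
qed

lemma le_root_of_powr_le_linear:
  fixes \<alpha> h b q :: real
  assumes q: "q > 1" and \<alpha>: "\<alpha> > 0" and h: "h \<ge> 0" and le: "\<alpha> * h powr q / q \<le> b * h"
  shows "h \<le> (q * b / \<alpha>) powr (1 / (q - 1))"
proof (cases "h = 0")
  case True
  then show ?thesis by simp
next
  case False
  then have h: "h > 0" using h by simp
  have "\<alpha> * h powr (q - 1) / q * h \<le> b * h"
    using le h by (simp add: powr_diff field_simps)
  then have "h powr (q - 1) \<le> q * b / \<alpha>" using h \<alpha> q by (simp add: field_simps)
  then have "(h powr (q - 1)) powr (1 / (q - 1)) \<le> (q * b / \<alpha>) powr (1 / (q - 1))"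
    using q by (intro powr_mono2) auto
  then show ?thesis using q h by (simp add: powr_powr)
qed

lemma nonneg_if_nonneg_plus_small_multiples:
  fixes c N :: real
  assumes "N \<ge> 0" and "\<And>t. 0 < t \<Longrightarrow> t \<le> 1 \<Longrightarrow> 0 \<le> c + t * N"
  shows "0 \<le> c"
proof (rule ccontr)
  assume "\<not> 0 \<le> c"
  define t where "t = min 1 (- c / (2 * (N + 1)))"
  have t: "0 < t" "t \<le> 1" using \<open>\<not> 0 \<le> c\<close> assms(1) by (auto simp: t_def divide_neg_pos)
  have "t * N \<le> - c / (2 * (N + 1)) * N" using assms(1) by (intro mult_right_mono) (auto simp: t_def)
  also have "\<dots> = - c / 2 * (N / (N + 1))" by simp
  also have "\<dots> \<le> - c / 2" using \<open>\<not> 0 \<le> c\<close> assms(1) by (intro mult_left_le) auto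
  finally show False using assms(2)[OF t] \<open>\<not> 0 \<le> c\<close> by linarith
qed

lemma le_of_square_le_linear:
  fixes E \<delta> p p' :: real
  assumes "\<delta> > 0" "E \<ge> 0" "p \<ge> 0" "p' \<ge> 0" "E\<^sup>2 \<le> p * \<delta> * E + p' * \<delta>\<^sup>2"
  shows "E \<le> (1 + p + p') * \<delta>"
proof (cases "E \<le> \<delta>")
  case True
  moreover have "\<delta> \<le> (1 + p + p') * \<delta>" using assms by (simp add: algebra_simps)
  ultimately show ?thesis by simp
next
  case False
  then have "p' * \<delta>\<^sup>2 \<le> p' * \<delta> * E" using assms by (simp add: power2_eq_square mult_left_mono mult.assoc)
  then have "E * E \<le> ((p + p') * \<delta>) * E" using assms(5) by (simp add: power2_eq_square algebra_simps)
  then have "E \<le> (p + p') * \<delta>" using False assms by (simp add: mult_le_cancel_right_pos)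
  then show ?thesis using assms by (simp add: algebra_simps)
qed

lemma residual_inner_bounds:
  fixes g y z :: "'a::real_inner"
  assumes noise: "norm (g - y) \<le> \<delta>"
  shows "(norm (y - z))\<^sup>2 - \<delta> * norm (y - z) \<le> inner (g - z) (y - z)"
    and "(norm (g - z))\<^sup>2 - norm (g - z) * \<delta> \<le> inner (g - z) (y - z)"
    and "norm (y - z) \<le> \<delta> + norm (g - z)"
    and "norm (g - z) \<le> \<delta> + norm (y - z)"
proof -
  have "inner (y - g) (y - z) \<le> norm (y - g) * norm (y - z)" by (rule norm_cauchy_schwarz)
  also have "\<dots> \<le> \<delta> * norm (y - z)" using noise by (intro mult_right_mono) (auto simp: norm_minus_commute)
  moreover have "inner (g - z) (y - z) = (norm (y - z))\<^sup>2 - inner (y - g) (y - z)"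
    by (simp add: inner_diff_left power2_norm_eq_inner)
  ultimately show "(norm (y - z))\<^sup>2 - \<delta> * norm (y - z) \<le> inner (g - z) (y - z)" by linarith
  have "inner (g - z) (g - y) \<le> norm (g - z) * norm (g - y)" by (rule norm_cauchy_schwarz)
  also have "\<dots> \<le> norm (g - z) * \<delta>" using noise by (intro mult_left_mono) auto
  moreover have "inner (g - z) (y - z) = (norm (g - z))\<^sup>2 - inner (g - z) (g - y)"
    by (simp add: inner_diff_right power2_norm_eq_inner)
  ultimately show "(norm (g - z))\<^sup>2 - norm (g - z) * \<delta> \<le> inner (g - z) (y - z)" by linarith
  show "norm (y - z) \<le> \<delta> + norm (g - z)"
    using norm_triangle_ineq4[of "g - z" "g - y"] noise by simp
  show "norm (g - z) \<le> \<delta> + norm (y - z)"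
    using norm_triangle_ineq[of "g - y" "y - z"] noise by simp
qed

lemma power2_norm_diff_scaleR:
  fixes w v :: "'a::real_inner"
  shows "(norm (w - t *\<^sub>R v))\<^sup>2 = (norm w)\<^sup>2 - 2 * t * inner w v + t\<^sup>2 * (norm v)\<^sup>2"
proof -
  have "inner (w - t *\<^sub>R v) (w - t *\<^sub>R v) = inner w w - 2 * t * inner w v + t\<^sup>2 * inner v v"
    by (simp add: inner_diff_left inner_diff_right inner_commute[of v w] power2_eq_square algebra_simps
        del: dot_square_norm)
  then show ?thesis by (simp only: power2_norm_eq_inner)
qed

lemma scaled_powr_eq:
  fixes \<delta> \<tau> b p r :: real assumes "\<delta> > 0" "\<tau> > 0"
  shows "(\<delta> * \<tau> powr b) powr p * \<tau> powr r = \<delta> powr p * \<tau> powr (b * p + r)"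
  using assms by (simp add: powr_mult powr_powr powr_add)

lemma apriori_parameter_scaling:
  fixes \<delta> \<tau> s a q :: real
  assumes \<delta>: "\<delta> > 0" and \<tau>: "\<tau> > 0" and sa: "s + a > 0"
  shows "(\<delta> * \<tau> powr (s + a)) powr (- (q * a / (s + a))) * \<delta> powr (((2 - q) * s + 2 * a) / (s + a))
         * (\<delta> powr (q - 1) * \<tau> powr (q * a)) = \<delta>"
proof -
  have "(\<delta> * \<tau> powr (s + a)) powr (- (q * a / (s + a))) * \<delta> powr (((2 - q) * s + 2 * a) / (s + a))
         * (\<delta> powr (q - 1) * \<tau> powr (q * a))
      = ((\<delta> * \<tau> powr (s + a)) powr (- (q * a / (s + a))) * \<tau> powr (q * a))
         * (\<delta> powr (((2 - q) * s + 2 * a) / (s + a)) * \<delta> powr (q - 1))"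
    by (simp only: mult_ac)
  also have "(\<delta> * \<tau> powr (s + a)) powr (- (q * a / (s + a))) * \<tau> powr (q * a) = \<delta> powr (- (q * a / (s + a)))"
    unfolding scaled_powr_eq[OF \<delta> \<tau>] using sa \<tau> by simp
  also have "\<delta> powr (- (q * a / (s + a))) * (\<delta> powr (((2 - q) * s + 2 * a) / (s + a)) * \<delta> powr (q - 1))
      = \<delta> powr (- (q * a / (s + a)) + ((2 - q) * s + 2 * a) / (s + a) + (q - 1))"
    by (simp only: powr_add mult.assoc)
  also have "- (q * a / (s + a)) + ((2 - q) * s + 2 * a) / (s + a) = (- (q * a) + ((2 - q) * s + 2 * a)) / (s + a)"
    by (simp add: add_divide_distrib diff_divide_distrib)
  also have "- (q * a) + ((2 - q) * s + 2 * a) = (2 - q) * (s + a)" by (simp add: algebra_simps)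
  finally show ?thesis using sa \<delta> by simp
qed

lemma rate_scaling:
  fixes \<delta> \<tau> s a :: real
  assumes \<delta>: "\<delta> > 0" and \<tau>: "\<tau> > 0" and sa: "s + a > 0"
  shows "(\<delta> * \<tau> powr (s + a)) powr (a / (s + a)) * \<delta> powr (s / (s + a)) = \<delta> * \<tau> powr a"
proof -
  have "(\<delta> * \<tau> powr (s + a)) powr (a / (s + a)) = \<delta> powr (a / (s + a)) * \<tau> powr a"
    using scaled_powr_eq[OF \<delta> \<tau>, of "s + a" "a / (s + a)" 0] sa \<tau> by simp
  moreover have "a / (s + a) + s / (s + a) = 1" using sa by (simp add: add_divide_distrib[symmetric])
  ultimately show ?thesis using \<delta> by (simp add: powr_add[symmetric] mult_ac)
qed

section \<open>Level-wise estimates\<close>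

lemma powr_gap_level_le:
  fixes u v w \<rho> M E a s q :: real
  assumes q: "q > 1" and u: "0 \<le> u" "u \<le> \<rho> * 2 powr (- (real j * s))" and v: "0 \<le> v"
    and w: "\<bar>u - v\<bar> \<le> w" "2 powr (real j * - a) * w \<le> M * E"
  shows "(u powr q - v powr q) / q \<le> \<rho> powr (q - 1) * (M * E) * 2 powr (real j * (a - s * (q - 1)))"
    and "(u powr q - v powr q) / q \<le> \<rho> powr q / q * 2 powr (- (real j * (s * q)))"
proof -
  have "(u powr q - v powr q) / q \<le> u powr (q - 1) * \<bar>u - v\<bar>"
    using powr_diff_div_le[of q u v] q u v by simp
  also have "\<dots> \<le> (\<rho> powr (q - 1) * 2 powr (- (real j * (s * (q - 1))))) * (M * E * 2 powr (real j * a))"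
  proof (intro mult_mono)
    show "u powr (q - 1) \<le> \<rho> powr (q - 1) * 2 powr (- (real j * (s * (q - 1))))"
      using u q by (intro dyadic_decay_powr) auto
    have "\<bar>u - v\<bar> \<le> 2 powr (real j * a) * (2 powr (real j * - a) * w)"
      using w(1) by (simp add: mult.assoc[symmetric] powr_add[symmetric])
    also have "\<dots> \<le> 2 powr (real j * a) * (M * E)" using w(2) by (intro mult_left_mono) auto
    finally show "\<bar>u - v\<bar> \<le> M * E * 2 powr (real j * a)" by (simp add: mult.commute)
  qed auto
  also have "\<dots> = \<rho> powr (q - 1) * (M * E) * 2 powr (real j * (a - s * (q - 1)))"
    by (simp add: powr_add[symmetric] algebra_simps)
  finally show "(u powr q - v powr q) / q \<le> \<rho> powr (q - 1) * (M * E) * 2 powr (real j * (a - s * (q - 1)))" .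
  have "(u powr q - v powr q) / q \<le> u powr q / q" using q v by (intro divide_right_mono) auto
  also have "\<dots> \<le> \<rho> powr q * 2 powr (- (real j * (s * q))) / q"
    using dyadic_decay_powr[OF u, of q] q by (intro divide_right_mono) auto
  finally show "(u powr q - v powr q) / q \<le> \<rho> powr q / q * 2 powr (- (real j * (s * q)))" by simp
qed

lemma penalty_gap_dyadic_bound:
  fixes x xh e :: "nat \<Rightarrow> real" and M E \<delta> \<tau> \<rho> a q s :: real
  assumes q: "q > 1" and s: "s > 0" and sa: "s * (q - 1) < a"
    and \<delta>: "\<delta> > 0" and \<tau>: "\<tau> > 0" and \<rho>: "\<rho> = \<delta> * \<tau> powr (s + a)"
    and x: "\<And>j. 0 \<le> x j \<and> x j \<le> \<rho> * 2 powr (- (real j * s))"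
    and xh: "\<And>j. 0 \<le> xh j"
    and e: "\<And>j. \<bar>x j - xh j\<bar> \<le> e j"
    and eE: "\<And>j. 2 powr (real j * - a) * e j \<le> M * E"
    and sx: "summable (\<lambda>j. x j powr q)" and sxh: "summable (\<lambda>j. xh j powr q)"
  shows "(\<Sum>j. x j powr q) / q - (\<Sum>j. xh j powr q) / q
         \<le> \<delta> powr (q - 1) * \<tau> powr (q * a) *
            ((M * 2 powr (a - s * (q - 1)) / (2 powr (a - s * (q - 1)) - 1)) * E
             + (1 / (q * (1 - 2 powr (- (s * q))))) * \<delta>)"
proof -
  define \<beta> where "\<beta> = a - s * (q - 1)"
  have \<beta>: "\<beta> > 0" using sa by (simp add: \<beta>_def)
  have sq: "s * q > 0" using s q by simp
  obtain J where J: "\<tau> \<le> 2 powr real J" "J > 0 \<longrightarrow> 2 powr real J \<le> 2 * \<tau>"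
    using exists_dyadic_scale[OF \<tau>] by blast
  have ME: "M * E \<ge> 0" using eE[of 0] order_trans[OF abs_ge_zero e[of 0]] by simp
  define lo where "lo j = \<rho> powr (q - 1) * (M * E) * 2 powr (real j * \<beta>)" for j
  define hi where "hi j = (\<rho> powr q / q) * 2 powr (- (real j * (s * q)))" for j
  define f where "f j = (x j powr q - xh j powr q) / q" for j
  have sf: "summable f" unfolding f_def using sx sxh by (intro summable_divide summable_diff)
  have shi: "summable hi" unfolding hi_def using dyadic_tail(1)[OF sq] .
  have split: "f j \<le> (if j < J then lo j else hi j)" for j
    using powr_gap_level_le[OF q conjunct1[OF x] conjunct2[OF x] xh e eE, of j]
    by (simp add: f_def lo_def hi_def \<beta>_def)
  have "(\<Sum>j. x j powr q) / q - (\<Sum>j. xh j powr q) / q = suminf f"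
    unfolding f_def using sx sxh
    by (simp add: suminf_diff[symmetric] suminf_divide[symmetric] summable_diff diff_divide_distrib)
  also have "\<dots> \<le> (\<Sum>j<J. lo j) + (\<Sum>n. hi (n + J))" by (rule suminf_le_split[OF sf shi split])
  also have "(\<Sum>j<J. lo j) \<le> \<rho> powr (q - 1) * (M * E) * ((2 * \<tau>) powr \<beta> / (2 powr \<beta> - 1))"
    unfolding lo_def sum_distrib_left[symmetric] using dyadic_head_le[OF \<beta> \<tau> J(2)] ME
    by (intro mult_left_mono) auto
  also have "(\<Sum>n. hi (n + J)) \<le> (\<rho> powr q / q) * \<tau> powr (- (s * q)) / (1 - 2 powr (- (s * q)))"
    unfolding hi_def using q by (intro dyadic_tail_le[OF sq _ \<tau> J(1)]) simp
  also have "\<rho> powr (q - 1) * (M * E) * ((2 * \<tau>) powr \<beta> / (2 powr \<beta> - 1))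
      = \<delta> powr (q - 1) * \<tau> powr (q * a) * ((M * 2 powr \<beta> / (2 powr \<beta> - 1)) * E)"
  proof -
    have "\<rho> powr (q - 1) * \<tau> powr \<beta> = \<delta> powr (q - 1) * \<tau> powr (q * a)"
      unfolding \<rho> scaled_powr_eq[OF \<delta> \<tau>] by (simp add: \<beta>_def algebra_simps)
    then show ?thesis using \<tau> by (simp add: powr_mult field_simps)
  qed
  also have "(\<rho> powr q / q) * \<tau> powr (- (s * q)) / (1 - 2 powr (- (s * q)))
      = \<delta> powr (q - 1) * \<tau> powr (q * a) * ((1 / (q * (1 - 2 powr (- (s * q))))) * \<delta>)"
  proof -
    have "\<rho> powr q * \<tau> powr (- (s * q)) = \<delta> powr (q - 1) * \<delta> * \<tau> powr (q * a)"
      unfolding \<rho> scaled_powr_eq[OF \<delta> \<tau>] using \<delta> by (simp add: powr_diff algebra_simps)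
    then show ?thesis by (simp add: field_simps)
  qed
  finally show ?thesis by (simp add: \<beta>_def algebra_simps)
qed

lemma square_level_le:
  fixes u v w B B' L a c s :: real
  assumes u: "0 \<le> u" "u \<le> B * 2 powr (- (real j * s))" and v: "0 \<le> v" "v \<le> B' * 2 powr (- (real j * c))"
    and w: "0 \<le> w" "w \<le> u + v" "2 powr (real j * - a) * w \<le> L"
  shows "w\<^sup>2 \<le> 2 * B\<^sup>2 * 2 powr (- (real j * (2 * s))) + 2 * B'\<^sup>2 * 2 powr (- (real j * (2 * c)))"
    and "w\<^sup>2 \<le> L\<^sup>2 * 2 powr (real j * (2 * a))"
proof -
  have "w\<^sup>2 \<le> (u + v)\<^sup>2" using w by (intro power_mono) auto
  also have "\<dots> \<le> 2 * u\<^sup>2 + 2 * v\<^sup>2" using sum_squares_ge_zero[of "u - v" 0]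
    by (simp add: power2_eq_square algebra_simps)
  also have "u\<^sup>2 \<le> (B * 2 powr (- (real j * s)))\<^sup>2" using u by (intro power_mono) auto
  also have "v\<^sup>2 \<le> (B' * 2 powr (- (real j * c)))\<^sup>2" using v by (intro power_mono) auto
  finally show "w\<^sup>2 \<le> 2 * B\<^sup>2 * 2 powr (- (real j * (2 * s))) + 2 * B'\<^sup>2 * 2 powr (- (real j * (2 * c)))"
    by (simp add: power_mult_distrib power2_powr mult_ac)
  have "w = 2 powr (real j * a) * (2 powr (real j * - a) * w)"
    by (simp add: mult.assoc[symmetric] powr_add[symmetric])
  also have "\<dots> \<le> 2 powr (real j * a) * L" using w(3) by (intro mult_left_mono) auto
  finally have "w\<^sup>2 \<le> (2 powr (real j * a) * L)\<^sup>2" using w(1) by (intro power_mono) auto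
  then show "w\<^sup>2 \<le> L\<^sup>2 * 2 powr (real j * (2 * a))" by (simp add: power_mult_distrib power2_powr mult_ac)
qed

lemma error_square_sum_dyadic_bound:
  fixes x xh e :: "nat \<Rightarrow> real" and L K \<delta> \<tau> a c s :: real
  assumes s: "s > 0" and a: "a > 0" and c: "c > 0" and \<delta>: "\<delta> > 0" and \<tau>: "\<tau> > 0"
    and x: "\<And>j. 0 \<le> x j \<and> x j \<le> \<delta> * \<tau> powr (s + a) * 2 powr (- (real j * s))"
    and xh: "\<And>j. 0 \<le> xh j \<and> xh j \<le> K * \<delta> * \<tau> powr (a + c) * 2 powr (- (real j * c))"
    and e: "\<And>j. 0 \<le> e j \<and> e j \<le> x j + xh j"
    and eL: "\<And>j. 2 powr (real j * - a) * e j \<le> L * \<delta>"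
  shows "summable (\<lambda>j. (e j)\<^sup>2)"
    and "(\<Sum>j. (e j)\<^sup>2) \<le> (L\<^sup>2 * 2 powr (2 * a) / (2 powr (2 * a) - 1) + 2 / (1 - 2 powr (- (2 * s)))
             + 2 * K\<^sup>2 / (1 - 2 powr (- (2 * c)))) * (\<delta> * \<tau> powr a)\<^sup>2"
proof -
  obtain J where J: "\<tau> \<le> 2 powr real J" "J > 0 \<longrightarrow> 2 powr real J \<le> 2 * \<tau>"
    using exists_dyadic_scale[OF \<tau>] by blast
  define hx where "hx j = 2 * (\<delta> * \<tau> powr (s + a))\<^sup>2 * 2 powr (- (real j * (2 * s)))" for j
  define hxh where "hxh j = 2 * (K * \<delta> * \<tau> powr (a + c))\<^sup>2 * 2 powr (- (real j * (2 * c)))" for j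
  define lo where "lo j = (L * \<delta>)\<^sup>2 * 2 powr (real j * (2 * a))" for j
  have shx: "summable hx" unfolding hx_def using s by (intro dyadic_tail(1)) simp
  have shxh: "summable hxh" unfolding hxh_def using c by (intro dyadic_tail(1)) simp
  note level = square_level_le[OF conjunct1[OF x] conjunct2[OF x] conjunct1[OF xh] conjunct2[OF xh]
      conjunct1[OF e] conjunct2[OF e] eL]
  have square_le: "(e j)\<^sup>2 \<le> hx j + hxh j" for j
    using level(1)[of j] by (simp add: hx_def hxh_def)
  have sh: "summable (\<lambda>j. hx j + hxh j)" using shx shxh by (rule summable_add)
  show se: "summable (\<lambda>j. (e j)\<^sup>2)"
    by (rule summable_comparison_test'[OF sh]) (use square_le in auto)
  have split: "(e j)\<^sup>2 \<le> (if j < J then lo j else hx j + hxh j)" for j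
    using level(2)[of j] square_le[of j] by (simp add: lo_def)
  have "(\<Sum>j. (e j)\<^sup>2) \<le> (\<Sum>j<J. lo j) + (\<Sum>n. hx (n + J) + hxh (n + J))"
    by (rule suminf_le_split[OF se sh split])
  also have "(\<Sum>n. hx (n + J) + hxh (n + J)) = (\<Sum>n. hx (n + J)) + (\<Sum>n. hxh (n + J))"
    using shx shxh by (intro suminf_add[symmetric]) (auto simp: summable_iff_shift)
  also have "(\<Sum>j<J. lo j) \<le> (L * \<delta>)\<^sup>2 * ((2 * \<tau>) powr (2 * a) / (2 powr (2 * a) - 1))"
    unfolding lo_def sum_distrib_left[symmetric] using a \<tau> J(2) by (intro mult_left_mono dyadic_head_le) auto
  also have "\<dots> = L\<^sup>2 * 2 powr (2 * a) / (2 powr (2 * a) - 1) * (\<delta> * \<tau> powr a)\<^sup>2"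
    using \<tau> by (simp add: powr_mult power2_powr power_mult_distrib field_simps)
  also have "(\<Sum>n. hx (n + J)) \<le> 2 / (1 - 2 powr (- (2 * s))) * (\<delta> * \<tau> powr a)\<^sup>2"
    unfolding hx_def add.commute[of s a] by (rule dyadic_square_tail_le[OF s \<tau> J(1)])
  also have "(\<Sum>n. hxh (n + J)) \<le> 2 / (1 - 2 powr (- (2 * c))) * (K * \<delta> * \<tau> powr a)\<^sup>2"
    unfolding hxh_def by (rule dyadic_square_tail_le[OF c \<tau> J(1)])
  finally show "(\<Sum>j. (e j)\<^sup>2) \<le> (L\<^sup>2 * 2 powr (2 * a) / (2 powr (2 * a) - 1) + 2 / (1 - 2 powr (- (2 * s)))
             + 2 * K\<^sup>2 / (1 - 2 powr (- (2 * c)))) * (\<delta> * \<tau> powr a)\<^sup>2"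
    by (simp add: power_mult_distrib algebra_simps)
qed

lemma discrepancy_bound_apriori:
  fixes \<delta> E I P k1 k2 cl cr :: real
  assumes \<delta>: "\<delta> > 0" and E: "E \<ge> 0" and k1: "k1 \<ge> 0" and k2: "k2 > 0"
    and lower: "E\<^sup>2 - \<delta> * E \<le> I" and upper: "I \<le> P * (k1 * E + k2 * \<delta>)"
    and P: "cl * \<delta> \<le> P" "P \<le> cr * \<delta>" and cl: "cl > 0"
  shows "E \<le> (2 + cr * k1 + cr * k2) * \<delta>"
proof -
  have "cl \<le> cr" using P \<delta> mult_le_cancel_right_pos[of \<delta> cl cr] by linarith
  then have cr: "cr \<ge> 0" using cl by simp
  have "P * (k1 * E + k2 * \<delta>) \<le> cr * \<delta> * (k1 * E + k2 * \<delta>)"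
    using P k1 k2 E \<delta> by (intro mult_right_mono) auto
  then have "E\<^sup>2 \<le> (1 + cr * k1) * \<delta> * E + (cr * k2) * \<delta>\<^sup>2"
    using lower upper by (simp add: algebra_simps power2_eq_square)
  from le_of_square_le_linear[OF \<delta> E _ _ this] show ?thesis
    using cr k1 k2 by (simp add: algebra_simps)
qed

lemma parameter_lower_bound_discrepancy:
  fixes \<delta> E r I P k1 k2 cD CD :: real
  assumes \<delta>: "\<delta> > 0" and E: "E \<ge> 0" and k1: "k1 \<ge> 0" and k2: "k2 > 0"
    and lower: "r\<^sup>2 - r * \<delta> \<le> I" and upper: "I \<le> P * (k1 * E + k2 * \<delta>)"
    and E_le: "E \<le> \<delta> + r" and r: "cD * \<delta> \<le> r" "r \<le> CD * \<delta>" and cD: "1 < cD"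
  shows "cD * (cD - 1) / (k1 * (1 + CD) + k2) * \<delta> \<le> P"
proof -
  have "cD \<le> CD" using r \<delta> mult_le_cancel_right_pos[of \<delta> cD CD] by linarith
  then have den: "k1 * (1 + CD) + k2 > 0" using k1 k2 cD by (simp add: add_nonneg_pos)
  have "cD * (cD - 1) * \<delta>\<^sup>2 = (cD * \<delta>) * ((cD - 1) * \<delta>)" by (simp add: power2_eq_square)
  also have "\<dots> \<le> r * (r - \<delta>)"
    using r cD \<delta> by (intro mult_mono) (auto simp: algebra_simps intro: order_trans[OF _ r(1)])
  also have "\<dots> \<le> P * (k1 * E + k2 * \<delta>)" using lower upper by (simp add: algebra_simps power2_eq_square)
  finally have gap: "cD * (cD - 1) * \<delta>\<^sup>2 \<le> P * (k1 * E + k2 * \<delta>)" .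
  have pos: "cD * (cD - 1) * \<delta>\<^sup>2 > 0" using cD \<delta> by simp
  have "P \<ge> 0"
  proof (rule ccontr)
    assume "\<not> P \<ge> 0"
    then have "P * (k1 * E + k2 * \<delta>) \<le> 0" using k1 k2 E \<delta> by (simp add: mult_nonpos_nonneg)
    with gap pos show False by linarith
  qed
  have "k1 * E \<le> k1 * ((1 + CD) * \<delta>)" using E_le r k1 by (intro mult_left_mono) (auto simp: algebra_simps)
  then have "k1 * E + k2 * \<delta> \<le> (k1 * (1 + CD) + k2) * \<delta>" by (simp add: algebra_simps)
  then have "P * (k1 * E + k2 * \<delta>) \<le> P * ((k1 * (1 + CD) + k2) * \<delta>)"
    using \<open>P \<ge> 0\<close> by (rule mult_left_mono)
  with gap have "(cD * (cD - 1) * \<delta>) * \<delta> \<le> (P * (k1 * (1 + CD) + k2)) * \<delta>"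
    by (simp add: power2_eq_square algebra_simps)
  then have "cD * (cD - 1) * \<delta> \<le> P * (k1 * (1 + CD) + k2)" using \<delta> by simp
  then show ?thesis using den by (simp add: field_simps)
qed

lemma discrepancy_and_parameter_bounds:
  fixes \<delta> E r I P k1 k2 cl cr cD CD :: real
  assumes \<delta>: "\<delta> > 0" and E: "E \<ge> 0" and k1: "k1 \<ge> 0" and k2: "k2 > 0"
    and lower_E: "E\<^sup>2 - \<delta> * E \<le> I" and lower_r: "r\<^sup>2 - r * \<delta> \<le> I"
    and upper: "I \<le> P * (k1 * E + k2 * \<delta>)" and E_le: "E \<le> \<delta> + r"
    and choice: "(cl * \<delta> \<le> P \<and> P \<le> cr * \<delta>) \<or> (cD * \<delta> \<le> r \<and> r \<le> CD * \<delta>)"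
    and cl: "cl > 0" and cD: "1 < cD"
  shows "E \<le> max (2 + cr * k1 + cr * k2) (1 + CD) * \<delta> \<and>
         min cl (cD * (cD - 1) / (k1 * (1 + CD) + k2)) * \<delta> \<le> P"
  using choice
proof (elim disjE conjE)
  assume P: "cl * \<delta> \<le> P" "P \<le> cr * \<delta>"
  have "E \<le> (2 + cr * k1 + cr * k2) * \<delta>"
    by (rule discrepancy_bound_apriori[OF \<delta> E k1 k2 lower_E upper P cl])
  moreover have "(2 + cr * k1 + cr * k2) * \<delta> \<le> max (2 + cr * k1 + cr * k2) (1 + CD) * \<delta>"
    using \<delta> by (intro mult_right_mono) auto
  moreover have "min cl (cD * (cD - 1) / (k1 * (1 + CD) + k2)) * \<delta> \<le> cl * \<delta>"
    using \<delta> by (intro mult_right_mono) auto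
  ultimately show ?thesis using P by linarith
next
  assume r: "cD * \<delta> \<le> r" "r \<le> CD * \<delta>"
  have "E \<le> (1 + CD) * \<delta>" using E_le r by (simp add: algebra_simps)
  moreover have "cD * (cD - 1) / (k1 * (1 + CD) + k2) * \<delta> \<le> P"
    by (rule parameter_lower_bound_discrepancy[OF \<delta> E k1 k2 lower_r upper E_le r cD])
  moreover have "min cl (cD * (cD - 1) / (k1 * (1 + CD) + k2)) * \<delta>
      \<le> cD * (cD - 1) / (k1 * (1 + CD) + k2) * \<delta>"
    using \<delta> by (intro mult_right_mono) auto
  moreover have "(1 + CD) * \<delta> \<le> max (2 + cr * k1 + cr * k2) (1 + CD) * \<delta>"
    using \<delta> by (intro mult_right_mono) auto
  ultimately show ?thesis by linarith
qed

section \<open>Tikhonov minimisers on Besov sequence spaces\<close>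

locale besov_tikhonov =
  fixes d :: nat and Lam :: "nat \<Rightarrow> 'k set"
    and A :: "(nat \<Rightarrow> 'k \<Rightarrow> real) \<Rightarrow> 'y::{real_inner, complete_space}"
    and M a q :: real
  assumes a_pos: "a > 0" and q_gt: "q > 1" and M_ge: "M \<ge> 1"
    and A_add: "\<And>x y. on_Lambda Lam x \<Longrightarrow> in_besov d Lam 2 2 (-a) x \<Longrightarrow>
                        on_Lambda Lam y \<Longrightarrow> in_besov d Lam 2 2 (-a) y \<Longrightarrow> A (\<lambda>j k. x j k + y j k) = A x + A y"
    and A_scale: "\<And>c x. on_Lambda Lam x \<Longrightarrow> in_besov d Lam 2 2 (-a) x \<Longrightarrow> A (\<lambda>j k. c * x j k) = c *\<^sub>R A x"
    and A_bounds: "\<And>x. on_Lambda Lam x \<Longrightarrow> in_besov d Lam 2 2 (-a) x \<Longrightarrow>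
                   (1 / M) * besov_norm d Lam 2 2 (-a) x \<le> norm (A x) \<and>
                   norm (A x) \<le> M * besov_norm d Lam 2 2 (-a) x"
begin

definition level_norm :: "(nat \<Rightarrow> 'k \<Rightarrow> real) \<Rightarrow> nat \<Rightarrow> real" where
  "level_norm z j = L2_set (z j) (Lam j)"

lemma level_norm_nonneg [simp]: "level_norm z j \<ge> 0"
  by (simp add: level_norm_def)

lemma besov_level_2_eq: "besov_level d Lam 2 s z j = 2 powr (real j * s) * level_norm z j"
proof -
  have "lp_norm 2 (Lam j) (z j) = level_norm z j"
    unfolding lp_norm_def level_norm_def L2_set_def by (simp add: powr_half_sqrt sum_nonneg)
  then show ?thesis by (simp add: besov_level_def)
qed

lemma in_besov_22_iff:
  "in_besov d Lam 2 2 s z \<longleftrightarrow> summable (\<lambda>j. (2 powr (real j * s) * level_norm z j)\<^sup>2)"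
  unfolding in_besov_def besov_level_2_eq by simp

lemma besov_norm_22_eq:
  assumes "in_besov d Lam 2 2 s z"
  shows "besov_norm d Lam 2 2 s z = sqrt (\<Sum>j. (2 powr (real j * s) * level_norm z j)\<^sup>2)"
  using assms unfolding besov_norm_def besov_level_2_eq in_besov_22_iff
  by (simp add: powr_half_sqrt suminf_nonneg)

lemma in_besov_2q0_iff: "in_besov d Lam 2 q 0 z \<longleftrightarrow> summable (\<lambda>j. level_norm z j powr q)"
  unfolding in_besov_def besov_level_2_eq by simp

lemma penalty_eq:
  assumes "summable (\<lambda>j. level_norm z j powr q)"
  shows "penalty d Lam q z = (\<Sum>j. level_norm z j powr q) / q"
proof -
  have "(\<Sum>j. level_norm z j powr q) \<ge> 0" using assms by (intro suminf_nonneg) auto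
  then show ?thesis
    using q_gt by (simp add: penalty_def besov_norm_def besov_level_2_eq powr_powr)
qed

lemma level_norm_add_le: "level_norm (\<lambda>j k. u j k + v j k) j \<le> level_norm u j + level_norm v j"
  unfolding level_norm_def by (rule L2_set_triangle_ineq)

lemma level_norm_scale: "level_norm (\<lambda>j k. c * u j k) j = \<bar>c\<bar> * level_norm u j"
  unfolding level_norm_def L2_set_def
  by (simp add: power_mult_distrib real_sqrt_mult sum_distrib_left[symmetric])

lemma level_norm_diff_le: "level_norm (\<lambda>j k. u j k - v j k) j \<le> level_norm u j + level_norm v j"
  using level_norm_add_le[of u "\<lambda>j k. (-1) * v j k" j] level_norm_scale[of "-1" v j] by simp

lemma abs_level_norm_diff_le: "\<bar>level_norm u j - level_norm v j\<bar> \<le> level_norm (\<lambda>j k. u j k - v j k) j"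
  using level_norm_add_le[of "\<lambda>j k. u j k - v j k" v j] level_norm_add_le[of "\<lambda>j k. v j k - u j k" u j]
    level_norm_scale[of "-1" "\<lambda>j k. u j k - v j k" j] by simp

lemma in_besov_neg_if_level_norm_bounded:
  assumes "\<And>j. level_norm z j \<le> B"
  shows "in_besov d Lam 2 2 (-a) z"
  unfolding in_besov_22_iff
proof (rule summable_comparison_test')
  show "summable (\<lambda>j. B\<^sup>2 * 2 powr (- (real j * (2 * a))))"
    using a_pos by (intro dyadic_tail(1)) simp
  fix j
  have "(2 powr (real j * - a) * level_norm z j)\<^sup>2 \<le> (2 powr (real j * - a))\<^sup>2 * B\<^sup>2"
    unfolding power_mult_distrib using assms[of j] by (intro mult_left_mono power_mono) auto
  also have "(2 powr (real j * - a))\<^sup>2 = (2::real) powr (- (real j * (2 * a)))"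
    by (simp add: power2_powr algebra_simps)
  finally show "norm ((2 powr (real j * - a) * level_norm z j)\<^sup>2) \<le> B\<^sup>2 * 2 powr (- (real j * (2 * a)))"
    by (simp add: mult.commute)
qed

lemma in_besov_neg_if_summable_powr:
  assumes "summable (\<lambda>j. level_norm z j powr q)"
  shows "in_besov d Lam 2 2 (-a) z"
proof (rule in_besov_neg_if_level_norm_bounded)
  fix j
  have "level_norm z j powr q \<le> (\<Sum>j. level_norm z j powr q)"
    using sum_le_suminf[OF assms, of "{j}"] by simp
  then have "(level_norm z j powr q) powr (1 / q) \<le> (\<Sum>j. level_norm z j powr q) powr (1 / q)"
    using q_gt by (intro powr_mono2) auto
  then show "level_norm z j \<le> (\<Sum>j. level_norm z j powr q) powr (1 / q)"
    using q_gt by (simp add: powr_powr)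
qed

lemma in_besov_neg_lincomb:
  assumes u: "in_besov d Lam 2 2 (-a) u" and v: "in_besov d Lam 2 2 (-a) v"
  shows "in_besov d Lam 2 2 (-a) (\<lambda>j k. c * u j k + e * v j k)"
  unfolding in_besov_22_iff
proof (rule summable_comparison_test')
  let ?w = "\<lambda>j. 2 powr (real j * - a) :: real"
  show "summable (\<lambda>j. 2 * c\<^sup>2 * (?w j * level_norm u j)\<^sup>2 + 2 * e\<^sup>2 * (?w j * level_norm v j)\<^sup>2)"
    using u v unfolding in_besov_22_iff by (intro summable_add summable_mult)
  fix j
  have "level_norm (\<lambda>j k. c * u j k + e * v j k) j \<le> \<bar>c\<bar> * level_norm u j + \<bar>e\<bar> * level_norm v j"
    using level_norm_add_le[of "\<lambda>j k. c * u j k" "\<lambda>j k. e * v j k" j] by (simp add: level_norm_scale)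
  then have "?w j * level_norm (\<lambda>j k. c * u j k + e * v j k) j
             \<le> ?w j * (\<bar>c\<bar> * level_norm u j + \<bar>e\<bar> * level_norm v j)"
    by (intro mult_left_mono) auto
  then have "(?w j * level_norm (\<lambda>j k. c * u j k + e * v j k) j)\<^sup>2
             \<le> (?w j * \<bar>c\<bar> * level_norm u j + ?w j * \<bar>e\<bar> * level_norm v j)\<^sup>2"
    by (intro power_mono) (auto simp: algebra_simps)
  also have "\<dots> \<le> 2 * (?w j * \<bar>c\<bar> * level_norm u j)\<^sup>2 + 2 * (?w j * \<bar>e\<bar> * level_norm v j)\<^sup>2"
    using sum_squares_ge_zero[of "?w j * \<bar>c\<bar> * level_norm u j - ?w j * \<bar>e\<bar> * level_norm v j" 0]
    by (simp add: power2_eq_square algebra_simps)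
  also have "\<dots> = 2 * c\<^sup>2 * (?w j * level_norm u j)\<^sup>2 + 2 * e\<^sup>2 * (?w j * level_norm v j)\<^sup>2"
    by (simp add: power_mult_distrib)
  finally show "norm ((?w j * level_norm (\<lambda>j k. c * u j k + e * v j k) j)\<^sup>2)
                \<le> 2 * c\<^sup>2 * (?w j * level_norm u j)\<^sup>2 + 2 * e\<^sup>2 * (?w j * level_norm v j)\<^sup>2"
    by simp
qed

lemma A_lincomb:
  assumes "on_Lambda Lam u" "in_besov d Lam 2 2 (-a) u" "on_Lambda Lam v" "in_besov d Lam 2 2 (-a) v"
  shows "A (\<lambda>j k. c * u j k + e * v j k) = c *\<^sub>R A u + e *\<^sub>R A v"
proof -
  have "in_besov d Lam 2 2 (-a) (\<lambda>j k. c * u j k)" "in_besov d Lam 2 2 (-a) (\<lambda>j k. e * v j k)"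
    using in_besov_neg_lincomb[OF assms(2,4), of c 0] in_besov_neg_lincomb[OF assms(2,4), of 0 e] by simp_all
  moreover have "on_Lambda Lam (\<lambda>j k. c * u j k)" "on_Lambda Lam (\<lambda>j k. e * v j k)"
    using assms by (auto simp: on_Lambda_def)
  ultimately show ?thesis using A_add A_scale assms by simp
qed

lemma A_diff:
  assumes "on_Lambda Lam u" "in_besov d Lam 2 2 (-a) u" "on_Lambda Lam v" "in_besov d Lam 2 2 (-a) v"
  shows "A (\<lambda>j k. u j k - v j k) = A u - A v"
  using A_lincomb[OF assms, of 1 "-1"] by simp

lemma besov_neg_level_le_norm:
  assumes "in_besov d Lam 2 2 (-a) z"
  shows "2 powr (real j * - a) * level_norm z j \<le> besov_norm d Lam 2 2 (-a) z"
proof -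
  have "(2 powr (real j * - a) * level_norm z j)\<^sup>2 \<le> (\<Sum>j. (2 powr (real j * - a) * level_norm z j)\<^sup>2)"
    using assms sum_le_suminf[of "\<lambda>j. (2 powr (real j * - a) * level_norm z j)\<^sup>2" "{j}"]
    unfolding in_besov_22_iff by simp
  then show ?thesis using real_sqrt_le_mono besov_norm_22_eq[OF assms] by fastforce
qed


lemma R_alpha_memD:
  assumes "xh \<in> R_alpha d Lam q A \<alpha> g"
  shows "on_Lambda Lam xh" and "summable (\<lambda>j. level_norm xh j powr q)"
    and "\<And>z. on_Lambda Lam z \<Longrightarrow> summable (\<lambda>j. level_norm z j powr q) \<Longrightarrow>
           tikhonov d Lam q A \<alpha> g xh \<le> tikhonov d Lam q A \<alpha> g z"
  using assms by (auto simp: R_alpha_def in_besov_2q0_iff)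

lemma level_powr_sum_convex_comb:
  assumes u: "summable (\<lambda>j. level_norm u j powr q)" and v: "summable (\<lambda>j. level_norm v j powr q)"
    and t: "0 \<le> t" "t \<le> 1"
  defines "w \<equiv> \<lambda>j k. (1 - t) * u j k + t * v j k"
  shows "summable (\<lambda>j. level_norm w j powr q)"
    and "(\<Sum>j. level_norm w j powr q) \<le> (1 - t) * (\<Sum>j. level_norm u j powr q) + t * (\<Sum>j. level_norm v j powr q)"
proof -
  have le: "level_norm w j powr q \<le> (1 - t) * level_norm u j powr q + t * level_norm v j powr q" for j
  proof -
    have "level_norm w j \<le> (1 - t) * level_norm u j + t * level_norm v j"
      unfolding w_def using level_norm_add_le[of "\<lambda>j k. (1 - t) * u j k" "\<lambda>j k. t * v j k" j] t
      by (simp add: level_norm_scale)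
    then have "level_norm w j powr q \<le> ((1 - t) * level_norm u j + t * level_norm v j) powr q"
      using q_gt by (intro powr_mono2) auto
    also have "\<dots> \<le> (1 - t) * level_norm u j powr q + t * level_norm v j powr q"
      using q_gt t by (intro powr_convex_comb_le) auto
    finally show ?thesis .
  qed
  have s: "summable (\<lambda>j. (1 - t) * level_norm u j powr q + t * level_norm v j powr q)"
    using u v by (intro summable_add summable_mult)
  show w: "summable (\<lambda>j. level_norm w j powr q)"
    by (rule summable_comparison_test'[OF s]) (use le in auto)
  have "(\<Sum>j. level_norm w j powr q) \<le> (\<Sum>j. (1 - t) * level_norm u j powr q + t * level_norm v j powr q)"
    by (rule suminf_le[OF le w s])
  also have "\<dots> = (1 - t) * (\<Sum>j. level_norm u j powr q) + t * (\<Sum>j. level_norm v j powr q)"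
    using u v by (simp add: suminf_add[symmetric] suminf_mult summable_mult)
  finally show "(\<Sum>j. level_norm w j powr q)
      \<le> (1 - t) * (\<Sum>j. level_norm u j powr q) + t * (\<Sum>j. level_norm v j powr q)" .
qed

lemma minimizer_perturbation_ineq:
  fixes g :: 'y
  assumes \<alpha>: "\<alpha> > 0" and xh: "xh \<in> R_alpha d Lam q A \<alpha> g"
    and z: "on_Lambda Lam z" and zq: "summable (\<lambda>j. level_norm z j powr q)"
    and t: "0 < t" "t \<le> 1"
  shows "2 * inner (g - A xh) (A z - A xh)
         \<le> 2 * \<alpha> * ((\<Sum>j. level_norm z j powr q) / q - (\<Sum>j. level_norm xh j powr q) / q)
            + t * (norm (A z - A xh))\<^sup>2"
proof -
  note xhL = R_alpha_memD(1)[OF xh] and xhq = R_alpha_memD(2)[OF xh]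
  define w where "w = g - A xh"
  define D where "D = A z - A xh"
  define Pz where "Pz = (\<Sum>j. level_norm z j powr q) / q"
  define Px where "Px = (\<Sum>j. level_norm xh j powr q) / q"
  define zt where "zt = (\<lambda>j k. (1 - t) * xh j k + t * z j k)"
  have ztq: "summable (\<lambda>j. level_norm zt j powr q)"
    and "(\<Sum>j. level_norm zt j powr q)
         \<le> (1 - t) * (\<Sum>j. level_norm xh j powr q) + t * (\<Sum>j. level_norm z j powr q)"
    using level_powr_sum_convex_comb[OF xhq zq, of t] t by (simp_all add: zt_def)
  from divide_right_mono[OF this(2), of q]
  have Pzt: "(\<Sum>j. level_norm zt j powr q) / q \<le> (1 - t) * Px + t * Pz"
    using q_gt by (simp add: Px_def Pz_def add_divide_distrib)
  have "A zt = (1 - t) *\<^sub>R A xh + t *\<^sub>R A z"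
    unfolding zt_def using xhL zq z xhq
    by (intro A_lincomb) (auto intro: in_besov_neg_if_summable_powr)
  then have "g - A zt = w - t *\<^sub>R D" by (simp add: w_def D_def algebra_simps)
  then have "(norm (g - A zt))\<^sup>2 = (norm w)\<^sup>2 - 2 * t * inner w D + t\<^sup>2 * (norm D)\<^sup>2"
    by (simp only: power2_norm_diff_scaleR)
  moreover have "tikhonov d Lam q A \<alpha> g xh \<le> tikhonov d Lam q A \<alpha> g zt"
    using R_alpha_memD(3)[OF xh] ztq xhL z by (simp add: zt_def on_Lambda_def)
  ultimately have "(norm w)\<^sup>2 / (2 * \<alpha>) + Px
      \<le> ((norm w)\<^sup>2 - 2 * t * inner w D + t\<^sup>2 * (norm D)\<^sup>2) / (2 * \<alpha>) + ((1 - t) * Px + t * Pz)"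
    using Pzt unfolding tikhonov_def penalty_eq[OF xhq] penalty_eq[OF ztq] by (simp add: w_def Px_def)
  then have "2 * \<alpha> * ((norm w)\<^sup>2 / (2 * \<alpha>) + Px)
      \<le> 2 * \<alpha> * (((norm w)\<^sup>2 - 2 * t * inner w D + t\<^sup>2 * (norm D)\<^sup>2) / (2 * \<alpha>) + ((1 - t) * Px + t * Pz))"
    using \<alpha> by (intro mult_left_mono) auto
  moreover have cancel: "\<And>Y Z. 2 * \<alpha> * (Y / (2 * \<alpha>) + Z) = Y + 2 * \<alpha> * Z"
    using \<alpha> by (simp add: field_simps)
  ultimately have "t * (2 * inner w D) \<le> t * (2 * \<alpha> * (Pz - Px) + t * (norm D)\<^sup>2)"
    unfolding cancel by (simp add: algebra_simps power2_eq_square)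
  then show ?thesis using t by (simp add: w_def D_def Pz_def Px_def)
qed

lemma variational_inequality:
  fixes g :: 'y
  assumes "\<alpha> > 0" and "xh \<in> R_alpha d Lam q A \<alpha> g"
    and "on_Lambda Lam z" and "summable (\<lambda>j. level_norm z j powr q)"
  shows "inner (g - A xh) (A z - A xh)
         \<le> \<alpha> * ((\<Sum>j. level_norm z j powr q) / q - (\<Sum>j. level_norm xh j powr q) / q)"
proof -
  have "0 \<le> (2 * \<alpha> * ((\<Sum>j. level_norm z j powr q) / q - (\<Sum>j. level_norm xh j powr q) / q)
              - 2 * inner (g - A xh) (A z - A xh)) + t * (norm (A z - A xh))\<^sup>2"
    if "0 < t" "t \<le> 1" for t
    using minimizer_perturbation_ineq[OF assms that] by simp
  from nonneg_if_nonneg_plus_small_multiples[OF zero_le_power2 this] show ?thesis by simp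
qed


lemma level_norm_le_A:
  assumes "on_Lambda Lam z" "in_besov d Lam 2 2 (-a) z"
  shows "2 powr (real j * - a) * level_norm z j \<le> M * norm (A z)"
proof -
  have "besov_norm d Lam 2 2 (-a) z \<le> M * norm (A z)"
    using A_bounds[OF assms] M_ge by (simp add: field_simps)
  then show ?thesis using besov_neg_level_le_norm[OF assms(2), of j] by linarith
qed

lemma single_level_besov_norm:
  assumes v: "\<And>i. level_norm v i = (if i = j then c else 0)"
  shows "in_besov d Lam 2 2 s v" and "besov_norm d Lam 2 2 s v = 2 powr (real j * s) * c"
proof -
  have c: "c \<ge> 0" using level_norm_nonneg[of v j] v[of j] by simp
  have "(\<lambda>i. (2 powr (real i * s) * level_norm v i)\<^sup>2) = (\<lambda>i. if i = j then (2 powr (real j * s) * c)\<^sup>2 else 0)"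
    by (auto simp: v)
  then have single: "(\<lambda>i. (2 powr (real i * s) * level_norm v i)\<^sup>2) sums (2 powr (real j * s) * c)\<^sup>2"
    using sums_single[of j "\<lambda>_. (2 powr (real j * s) * c)\<^sup>2"] by simp
  then show "in_besov d Lam 2 2 s v" unfolding in_besov_22_iff by (rule sums_summable)
  then show "besov_norm d Lam 2 2 s v = 2 powr (real j * s) * c"
    using single c by (simp add: besov_norm_22_eq sums_iff)
qed

lemma minimizer_level_estimate:
  fixes g :: 'y
  assumes \<alpha>: "\<alpha> > 0" and xh: "xh \<in> R_alpha d Lam q A \<alpha> g"
  shows "\<alpha> * level_norm xh j powr q / q \<le> norm (g - A xh) * (M * (2 powr (real j * - a) * level_norm xh j))"
proof -
  note xhL = R_alpha_memD(1)[OF xh] and xhq = R_alpha_memD(2)[OF xh]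
  define z where "z = (\<lambda>i k. if i = j then 0 else xh i k)"
  define v where "v = (\<lambda>i k. z i k - xh i k)"
  have zL: "on_Lambda Lam z" and vL: "on_Lambda Lam v"
    using xhL by (auto simp: z_def v_def on_Lambda_def)
  have level_z: "level_norm z i = (if i = j then 0 else level_norm xh i)" for i
    by (simp add: level_norm_def z_def L2_set_def)
  have level_v: "level_norm v i = (if i = j then level_norm xh j else 0)" for i
    by (simp add: level_norm_def v_def z_def L2_set_def)
  have single: "(\<lambda>i. if i = j then level_norm xh j powr q else 0) sums (level_norm xh j powr q)"
    using sums_single[of j "\<lambda>_. level_norm xh j powr q"] by simp
  have zq_eq: "(\<lambda>i. level_norm z i powr q) = (\<lambda>i. level_norm xh i powr q - (if i = j then level_norm xh j powr q else 0))"
    by (auto simp: level_z)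
  have zq: "summable (\<lambda>i. level_norm z i powr q)"
    unfolding zq_eq using xhq single by (intro summable_diff) (auto simp: sums_iff)
  have sum_z: "(\<Sum>i. level_norm z i powr q) = (\<Sum>i. level_norm xh i powr q) - level_norm xh j powr q"
    unfolding zq_eq suminf_diff[OF xhq sums_summable[OF single], symmetric] using single by (simp add: sums_iff)
  have "inner (g - A xh) (A z - A xh) \<le> - (\<alpha> * level_norm xh j powr q / q)"
    using variational_inequality[OF \<alpha> xh zL zq] unfolding sum_z
    by (simp add: diff_divide_distrib right_diff_distrib)
  then have "\<alpha> * level_norm xh j powr q / q \<le> - inner (g - A xh) (A z - A xh)" by simp
  also have "A z - A xh = A v"
    unfolding v_def using zL zq xhL xhq by (intro A_diff[symmetric]) (auto intro: in_besov_neg_if_summable_powr)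
  also have "- inner (g - A xh) (A v) \<le> norm (g - A xh) * norm (A v)"
    using norm_cauchy_schwarz[of "g - A xh" "- A v"] by simp
  also have "norm (A v) \<le> M * (2 powr (real j * - a) * level_norm xh j)"
    using A_bounds[OF vL single_level_besov_norm(1)[OF level_v]] single_level_besov_norm(2)[OF level_v]
    by simp
  finally show ?thesis by (simp add: mult_left_mono)
qed

lemma minimizer_level_decay:
  fixes g :: 'y and \<alpha> \<delta> \<tau> k0 c :: real
  assumes \<alpha>: "\<alpha> > 0" and xh: "xh \<in> R_alpha d Lam q A \<alpha> g"
    and \<delta>: "\<delta> > 0" and \<tau>: "\<tau> > 0" and k0: "k0 > 0" and c: "c \<ge> 0"
    and residual: "norm (g - A xh) \<le> c * \<delta>"
    and parameter: "k0 * \<delta> \<le> \<alpha> * (\<delta> powr (q - 1) * \<tau> powr (q * a))"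
  shows "level_norm xh j \<le> (q * M * c / k0) powr (1 / (q - 1)) * \<delta> * \<tau> powr (a + a / (q - 1))
           * 2 powr (- (real j * (a / (q - 1))))"
proof -
  define K where "K = q * M * c / k0"
  define \<Phi> where "\<Phi> = \<delta> powr (q - 1) * \<tau> powr (q * a)"
  have K: "K \<ge> 0" using q_gt M_ge c k0 by (simp add: K_def)
  have \<Phi>: "\<Phi> > 0" using \<delta> \<tau> by (simp add: \<Phi>_def)
  have "level_norm xh j \<le> (q * (norm (g - A xh) * M * 2 powr (real j * - a)) / \<alpha>) powr (1 / (q - 1))"
    using minimizer_level_estimate[OF \<alpha> xh, of j] q_gt \<alpha>
    by (intro le_root_of_powr_le_linear) (auto simp: mult_ac)
  also have "\<dots> \<le> (K * \<Phi> * 2 powr (real j * - a)) powr (1 / (q - 1))"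
  proof (intro powr_mono2)
    have "1 / \<alpha> \<le> \<Phi> / (k0 * \<delta>)" using parameter \<alpha> k0 \<delta> \<Phi> by (simp add: \<Phi>_def field_simps)
    moreover have "q * (norm (g - A xh) * M * 2 powr (real j * - a)) \<le> q * (c * \<delta> * M * 2 powr (real j * - a))"
      using residual q_gt M_ge by (intro mult_left_mono mult_right_mono) auto
    ultimately have "q * (norm (g - A xh) * M * 2 powr (real j * - a)) * (1 / \<alpha>)
        \<le> q * (c * \<delta> * M * 2 powr (real j * - a)) * (\<Phi> / (k0 * \<delta>))"
      using q_gt c \<delta> M_ge \<alpha> by (intro mult_mono) auto
    then show "q * (norm (g - A xh) * M * 2 powr (real j * - a)) / \<alpha> \<le> K * \<Phi> * 2 powr (real j * - a)"
      using \<delta> k0 by (simp add: K_def field_simps)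
  qed (use q_gt \<alpha> M_ge in auto)
  also have "\<dots> = K powr (1 / (q - 1)) * \<Phi> powr (1 / (q - 1)) * (2 powr (real j * - a)) powr (1 / (q - 1))"
    using K \<Phi> by (simp add: powr_mult)
  also have "\<Phi> powr (1 / (q - 1)) = \<delta> * \<tau> powr (a + a / (q - 1))"
    using \<delta> \<tau> q_gt by (simp add: \<Phi>_def powr_mult powr_powr field_simps)
  also have "(2 powr (real j * - a)) powr (1 / (q - 1)) = 2 powr (- (real j * (a / (q - 1))))"
    by (simp add: powr_powr)
  finally show ?thesis by (simp add: K_def mult.assoc)
qed

lemma besov_inf_level_norm_le:
  assumes "in_besov_inf d Lam 2 s x" "besov_norm_inf d Lam 2 s x \<le> \<rho>"
  shows "level_norm x j \<le> \<rho> * 2 powr (- (real j * s))"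
proof -
  have "besov_level d Lam 2 s x j \<le> besov_norm_inf d Lam 2 s x"
    using assms(1) unfolding in_besov_inf_def besov_norm_inf_def by (intro cSUP_upper) auto
  then have "2 powr (real j * s) * level_norm x j \<le> \<rho>" using assms(2) by (simp add: besov_level_2_eq)
  then show ?thesis by (simp add: powr_minus field_simps)
qed

lemma summable_level_powr_of_besov_inf:
  assumes "in_besov_inf d Lam 2 s x" "besov_norm_inf d Lam 2 s x \<le> \<rho>" "s > 0"
  shows "summable (\<lambda>j. level_norm x j powr q)"
proof (rule summable_comparison_test')
  show "summable (\<lambda>j. \<rho> powr q * 2 powr (- (real j * (s * q))))"
    using assms(3) q_gt by (intro dyadic_tail(1)) simp
  show "norm (level_norm x j powr q) \<le> \<rho> powr q * 2 powr (- (real j * (s * q)))" for j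
    using besov_inf_level_norm_le[OF assms(1,2), of j] q_gt by (simp add: dyadic_decay_powr)
qed

lemma error_level_le_A_diff:
  assumes "on_Lambda Lam x" "summable (\<lambda>j. level_norm x j powr q)"
    and "on_Lambda Lam xh" "summable (\<lambda>j. level_norm xh j powr q)"
  shows "2 powr (real j * - a) * level_norm (\<lambda>j k. x j k - xh j k) j \<le> M * norm (A x - A xh)"
proof -
  have Hx: "in_besov d Lam 2 2 (-a) x" and Hxh: "in_besov d Lam 2 2 (-a) xh"
    using assms(2,4) by (auto intro: in_besov_neg_if_summable_powr)
  have "on_Lambda Lam (\<lambda>j k. x j k - xh j k)" using assms(1,3) by (auto simp: on_Lambda_def)
  moreover have "in_besov d Lam 2 2 (-a) (\<lambda>j k. x j k - xh j k)"
    using in_besov_neg_lincomb[OF Hx Hxh, of 1 "-1"] by simp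
  ultimately show ?thesis using level_norm_le_A A_diff[OF assms(1) Hx assms(3) Hxh] by metis
qed

end

section \<open>Convergence rate\<close>

locale besov_tikhonov_rate = besov_tikhonov +
  fixes s cl cr cD CD :: real
  assumes s_pos: "0 < s" and s_lt: "s < a / (q - 1)"
    and cl_pos: "0 < cl" and cD_gt: "1 < cD" and cD_CD: "cD < CD"
begin

(* gap_coeff and noise_coeff are the constants k1 and k2 of the penalty-gap bound. *)
definition gap_coeff :: real where
  "gap_coeff = M * 2 powr (a - s * (q - 1)) / (2 powr (a - s * (q - 1)) - 1)"

definition noise_coeff :: real where
  "noise_coeff = 1 / (q * (1 - 2 powr (- (s * q))))"

definition discrepancy_coeff :: real where
  "discrepancy_coeff = max (2 + cr * gap_coeff + cr * noise_coeff) (1 + CD)"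

definition parameter_coeff :: real where
  "parameter_coeff = min cl (cD * (cD - 1) / (gap_coeff * (1 + CD) + noise_coeff))"

definition decay_coeff :: real where
  "decay_coeff = (q * M * (1 + discrepancy_coeff) / parameter_coeff) powr (1 / (q - 1))"

definition rate_const :: real where
  "rate_const = sqrt ((M * discrepancy_coeff)\<^sup>2 * 2 powr (2 * a) / (2 powr (2 * a) - 1)
     + 2 / (1 - 2 powr (- (2 * s))) + 2 * decay_coeff\<^sup>2 / (1 - 2 powr (- (2 * (a / (q - 1))))))"

lemma s_mult_lt: "s * (q - 1) < a"
  using s_lt q_gt by (simp add: field_simps)

lemma gap_coeff_nonneg: "gap_coeff \<ge> 0"
proof -
  have "2 powr (a - s * (q - 1)) > (1::real)" using s_mult_lt by simp
  then show ?thesis using M_ge by (simp add: gap_coeff_def)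
qed

lemma noise_coeff_pos: "noise_coeff > 0"
  using one_minus_two_powr_neg_pos[of "s * q"] s_pos q_gt by (simp add: noise_coeff_def)

lemma discrepancy_coeff_nonneg: "discrepancy_coeff \<ge> 0"
  using cD_gt cD_CD by (simp add: discrepancy_coeff_def le_max_iff_disj)

lemma parameter_coeff_pos: "parameter_coeff > 0"
proof -
  have "gap_coeff * (1 + CD) + noise_coeff > 0"
    using gap_coeff_nonneg noise_coeff_pos cD_gt cD_CD by (simp add: add_nonneg_pos)
  then show ?thesis using cl_pos cD_gt by (simp add: parameter_coeff_def)
qed

lemma rate_const_pos: "rate_const > 0"
proof -
  have "2 powr (2 * a) > (1::real)" using a_pos by simp
  then have "(M * discrepancy_coeff)\<^sup>2 * 2 powr (2 * a) / (2 powr (2 * a) - 1) \<ge> 0" by simp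
  moreover have "2 / (1 - 2 powr (- (2 * s))) > 0"
    using one_minus_two_powr_neg_pos[of "2 * s"] s_pos by simp
  moreover have "2 * decay_coeff\<^sup>2 / (1 - 2 powr (- (2 * (a / (q - 1))))) \<ge> 0"
    using one_minus_two_powr_neg_pos[of "2 * (a / (q - 1))"] a_pos q_gt by simp
  ultimately show ?thesis unfolding rate_const_def by (intro real_sqrt_gt_zero) linarith
qed

lemma discrepancy_and_parameter_estimate:
  assumes x: "on_Lambda Lam x" "in_besov_inf d Lam 2 s x" "besov_norm_inf d Lam 2 s x \<le> \<rho>"
    and \<delta>: "\<delta> > 0" and \<tau>: "\<tau> > 0" and \<rho>: "\<rho> = \<delta> * \<tau> powr (s + a)"
    and noise: "norm (g - A x) \<le> \<delta>" and \<alpha>: "\<alpha> > 0" and xh: "xh \<in> R_alpha d Lam q A \<alpha> g"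
    and choice: "(cl * \<delta> \<le> \<alpha> * (\<delta> powr (q - 1) * \<tau> powr (q * a)) \<and>
                  \<alpha> * (\<delta> powr (q - 1) * \<tau> powr (q * a)) \<le> cr * \<delta>)
               \<or> (cD * \<delta> \<le> norm (g - A xh) \<and> norm (g - A xh) \<le> CD * \<delta>)"
  shows "norm (A x - A xh) \<le> discrepancy_coeff * \<delta>"
    and "norm (g - A xh) \<le> (1 + discrepancy_coeff) * \<delta>"
    and "parameter_coeff * \<delta> \<le> \<alpha> * (\<delta> powr (q - 1) * \<tau> powr (q * a))"
proof -
  note xh_props = R_alpha_memD(1,2)[OF xh]
  have xq: "summable (\<lambda>j. level_norm x j powr q)"
    using summable_level_powr_of_besov_inf[OF x(2,3) s_pos] .
  note inner_bounds = residual_inner_bounds[OF noise, of "A xh"]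
  have x_levels: "0 \<le> level_norm x j \<and> level_norm x j \<le> \<rho> * 2 powr (- (real j * s))" for j
    using besov_inf_level_norm_le[OF x(2,3)] by simp
  have "(\<Sum>j. level_norm x j powr q) / q - (\<Sum>j. level_norm xh j powr q) / q
        \<le> \<delta> powr (q - 1) * \<tau> powr (q * a) * (gap_coeff * norm (A x - A xh) + noise_coeff * \<delta>)"
    using penalty_gap_dyadic_bound[OF q_gt s_pos s_mult_lt \<delta> \<tau> \<rho> x_levels level_norm_nonneg
        abs_level_norm_diff_le[of x _ xh] error_level_le_A_diff[OF x(1) xq xh_props] xq xh_props(2)]
    by (simp add: gap_coeff_def noise_coeff_def)
  then have "\<alpha> * ((\<Sum>j. level_norm x j powr q) / q - (\<Sum>j. level_norm xh j powr q) / q)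
      \<le> \<alpha> * (\<delta> powr (q - 1) * \<tau> powr (q * a) * (gap_coeff * norm (A x - A xh) + noise_coeff * \<delta>))"
    using \<alpha> by (intro mult_left_mono) auto
  from order_trans[OF variational_inequality[OF \<alpha> xh x(1) xq] this]
  have upper: "inner (g - A xh) (A x - A xh)
      \<le> \<alpha> * (\<delta> powr (q - 1) * \<tau> powr (q * a)) * (gap_coeff * norm (A x - A xh) + noise_coeff * \<delta>)"
    by (simp only: mult.assoc)
  have bounds: "norm (A x - A xh) \<le> discrepancy_coeff * \<delta> \<and>
      parameter_coeff * \<delta> \<le> \<alpha> * (\<delta> powr (q - 1) * \<tau> powr (q * a))"
    unfolding discrepancy_coeff_def parameter_coeff_def
    by (rule discrepancy_and_parameter_bounds[OF \<delta> norm_ge_zero gap_coeff_nonneg noise_coeff_pos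
          inner_bounds(1,2) upper inner_bounds(3) choice cl_pos cD_gt])
  then show "norm (A x - A xh) \<le> discrepancy_coeff * \<delta>"
    and "parameter_coeff * \<delta> \<le> \<alpha> * (\<delta> powr (q - 1) * \<tau> powr (q * a))" by auto
  show "norm (g - A xh) \<le> (1 + discrepancy_coeff) * \<delta>"
    using bounds inner_bounds(4) by (simp add: algebra_simps)
qed

lemma error_estimate:
  assumes x: "on_Lambda Lam x" "in_besov_inf d Lam 2 s x" "besov_norm_inf d Lam 2 s x \<le> \<rho>"
    and \<delta>: "\<delta> > 0" and \<tau>: "\<tau> > 0" and \<rho>: "\<rho> = \<delta> * \<tau> powr (s + a)"
    and noise: "norm (g - A x) \<le> \<delta>" and \<alpha>: "\<alpha> > 0" and xh: "xh \<in> R_alpha d Lam q A \<alpha> g"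
    and choice: "(cl * \<delta> \<le> \<alpha> * (\<delta> powr (q - 1) * \<tau> powr (q * a)) \<and>
                  \<alpha> * (\<delta> powr (q - 1) * \<tau> powr (q * a)) \<le> cr * \<delta>)
               \<or> (cD * \<delta> \<le> norm (g - A xh) \<and> norm (g - A xh) \<le> CD * \<delta>)"
  shows "in_besov d Lam 2 2 0 (\<lambda>j k. x j k - xh j k)"
    and "besov_norm d Lam 2 2 0 (\<lambda>j k. x j k - xh j k) \<le> rate_const * (\<delta> * \<tau> powr a)"
proof -
  note estimates = discrepancy_and_parameter_estimate[OF assms]
  note xh_props = R_alpha_memD(1,2)[OF xh]
  have xq: "summable (\<lambda>j. level_norm x j powr q)"
    using summable_level_powr_of_besov_inf[OF x(2,3) s_pos] .
  define e where "e = (\<lambda>j k. x j k - xh j k)"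
  have "2 powr (real j * - a) * level_norm e j \<le> M * discrepancy_coeff * \<delta>" for j
  proof -
    have "M * norm (A x - A xh) \<le> M * (discrepancy_coeff * \<delta>)"
      using estimates(1) M_ge by (intro mult_left_mono) auto
    then show ?thesis using error_level_le_A_diff[OF x(1) xq xh_props, of j] by (simp add: e_def mult.assoc)
  qed
  note error_bound = error_square_sum_dyadic_bound[of s a "a / (q - 1)" \<delta> \<tau> "level_norm x"
      "level_norm xh" decay_coeff "level_norm e" "M * discrepancy_coeff", OF s_pos a_pos _ \<delta> \<tau> _ _ _ this]
  have decay: "level_norm xh j \<le> decay_coeff * \<delta> * \<tau> powr (a + a / (q - 1)) * 2 powr (- (real j * (a / (q - 1))))"
    for j
    unfolding decay_coeff_def
    by (rule minimizer_level_decay[OF \<alpha> xh \<delta> \<tau> parameter_coeff_pos _ estimates(2,3)])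
      (use discrepancy_coeff_nonneg in simp)
  have levels: "0 \<le> level_norm x j \<and> level_norm x j \<le> \<delta> * \<tau> powr (s + a) * 2 powr (- (real j * s))"
    "0 \<le> level_norm e j \<and> level_norm e j \<le> level_norm x j + level_norm xh j" for j
    using besov_inf_level_norm_le[OF x(2,3), of j] level_norm_diff_le[of x xh j] by (simp_all add: \<rho> e_def)
  have sum: "summable (\<lambda>j. (level_norm e j)\<^sup>2)"
    and sum_le: "(\<Sum>j. (level_norm e j)\<^sup>2) \<le> (rate_const)\<^sup>2 * (\<delta> * \<tau> powr a)\<^sup>2"
    using error_bound levels decay a_pos q_gt rate_const_pos
    by (auto simp: rate_const_def)
  show "in_besov d Lam 2 2 0 (\<lambda>j k. x j k - xh j k)"
    using sum unfolding in_besov_22_iff e_def by simp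
  then have "besov_norm d Lam 2 2 0 (\<lambda>j k. x j k - xh j k) = sqrt (\<Sum>j. (level_norm e j)\<^sup>2)"
    by (simp add: besov_norm_22_eq e_def)
  also have "\<dots> \<le> sqrt ((rate_const * (\<delta> * \<tau> powr a))\<^sup>2)"
    using sum_le by (simp add: power_mult_distrib)
  finally show "besov_norm d Lam 2 2 0 (\<lambda>j k. x j k - xh j k) \<le> rate_const * (\<delta> * \<tau> powr a)"
    using rate_const_pos \<delta> by simp
qed

lemma convergence_rate:
  assumes x: "on_Lambda Lam x" "in_besov_inf d Lam 2 s x" "besov_norm_inf d Lam 2 s x \<le> \<rho>"
    and \<delta>: "\<delta> > 0" and \<rho>: "\<rho> > 0" and noise: "norm (g - A x) \<le> \<delta>"
    and \<alpha>: "\<alpha> > 0" and xh: "xh \<in> R_alpha d Lam q A \<alpha> g"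
    and choice: "(cl * \<rho> powr (- (q * a / (s + a))) * \<delta> powr (((2 - q) * s + 2 * a) / (s + a)) \<le> \<alpha> \<and>
                  \<alpha> \<le> cr * \<rho> powr (- (q * a / (s + a))) * \<delta> powr (((2 - q) * s + 2 * a) / (s + a)))
               \<or> (cD * \<delta> \<le> norm (g - A xh) \<and> norm (g - A xh) \<le> CD * \<delta>)"
  shows "in_besov d Lam 2 2 0 (\<lambda>j k. x j k - xh j k) \<and>
         besov_norm d Lam 2 2 0 (\<lambda>j k. x j k - xh j k) \<le> rate_const * \<rho> powr (a / (s + a)) * \<delta> powr (s / (s + a))"
proof -
  have sa: "s + a > 0" using s_pos a_pos by simp
  define \<tau> where "\<tau> = (\<rho> / \<delta>) powr (1 / (s + a))"
  have \<tau>: "\<tau> > 0" and \<rho>_eq: "\<rho> = \<delta> * \<tau> powr (s + a)"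
    using \<rho> \<delta> sa by (simp_all add: \<tau>_def powr_powr)
  define \<Phi> where "\<Phi> = \<delta> powr (q - 1) * \<tau> powr (q * a)"
  have "\<Phi> > 0" using \<delta> \<tau> by (simp add: \<Phi>_def)
  moreover have "\<rho> powr (- (q * a / (s + a))) * \<delta> powr (((2 - q) * s + 2 * a) / (s + a)) * \<Phi> = \<delta>"
    unfolding \<rho>_eq \<Phi>_def by (rule apriori_parameter_scaling[OF \<delta> \<tau> sa])
  ultimately have "(cl * \<delta> \<le> \<alpha> * \<Phi> \<and> \<alpha> * \<Phi> \<le> cr * \<delta>)
      \<or> (cD * \<delta> \<le> norm (g - A xh) \<and> norm (g - A xh) \<le> CD * \<delta>)"
    using choice by (auto simp: mult.assoc dest: mult_right_mono[OF _ less_imp_le[of 0 \<Phi>]])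
  note error = error_estimate[OF x \<delta> \<tau> \<rho>_eq noise \<alpha> xh this[unfolded \<Phi>_def]]
  show ?thesis using error rate_scaling[OF \<delta> \<tau> sa] by (simp add: \<rho>_eq mult.assoc)
qed

end

theorem corollary2p10:
  fixes d :: nat and Lam :: "nat \<Rightarrow> 'k set" and C\<^sub>\<Lambda> :: real
    and A :: "(nat \<Rightarrow> 'k \<Rightarrow> real) \<Rightarrow> 'y::{real_inner, complete_space}"
    and M a q s c\<^sub>l c\<^sub>r c\<^sub>D C\<^sub>D :: real
  assumes d_pos: "d \<ge> 1"
    and Lam_fin: "\<And>j. finite (Lam j)"
    and Lam_card: "\<And>j. 2 ^ (j * d) \<le> real (card (Lam j)) \<and> real (card (Lam j)) \<le> C\<^sub>\<Lambda> * 2 ^ (j * d)"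
    and a_pos: "a > 0"
    and A_add: "\<And>x y. on_Lambda Lam x \<Longrightarrow> in_besov d Lam 2 2 (-a) x \<Longrightarrow>
                        on_Lambda Lam y \<Longrightarrow> in_besov d Lam 2 2 (-a) y \<Longrightarrow> A (\<lambda>j k. x j k + y j k) = A x + A y"
    and A_scale: "\<And>c x. on_Lambda Lam x \<Longrightarrow> in_besov d Lam 2 2 (-a) x \<Longrightarrow> A (\<lambda>j k. c * x j k) = c *\<^sub>R A x"
    and M_ge: "M \<ge> 1"
    and A_bounds: "\<And>x. on_Lambda Lam x \<Longrightarrow> in_besov d Lam 2 2 (-a) x \<Longrightarrow>
                   (1 / M) * besov_norm d Lam 2 2 (-a) x \<le> norm (A x) \<and>
                   norm (A x) \<le> M * besov_norm d Lam 2 2 (-a) x"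
    and q_gt: "q > 1"
    and s_pos: "0 < s" and s_lt: "s < a / (q - 1)"
    and cl_pos: "0 < c\<^sub>l" and cl_cr: "c\<^sub>l \<le> c\<^sub>r"
    and cD_gt: "1 < c\<^sub>D" and cD_CD: "c\<^sub>D < C\<^sub>D"
  shows "\<exists>C > 0. \<forall>x \<delta> \<rho> (g::'y) \<alpha> xh.
           on_Lambda Lam x \<and> in_besov_inf d Lam 2 s x \<and> besov_norm_inf d Lam 2 s x \<le> \<rho> \<and>
           \<delta> > 0 \<and> \<rho> > 0 \<and> norm (g - A x) \<le> \<delta> \<and> \<alpha> > 0 \<and> xh \<in> R_alpha d Lam q A \<alpha> g \<and>
           ((c\<^sub>l * \<rho> powr (- (q * a / (s + a))) * \<delta> powr (((2 - q) * s + 2 * a) / (s + a)) \<le> \<alpha> \<and>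
             \<alpha> \<le> c\<^sub>r * \<rho> powr (- (q * a / (s + a))) * \<delta> powr (((2 - q) * s + 2 * a) / (s + a)))
            \<or> (c\<^sub>D * \<delta> \<le> norm (g - A xh) \<and> norm (g - A xh) \<le> C\<^sub>D * \<delta>))
           \<longrightarrow> in_besov d Lam 2 2 0 (\<lambda>j k. x j k - xh j k) \<and>
               besov_norm d Lam 2 2 0 (\<lambda>j k. x j k - xh j k) \<le> C * \<rho> powr (a / (s + a)) * \<delta> powr (s / (s + a))"
proof -
  interpret besov_tikhonov_rate d Lam A M a q s c\<^sub>l c\<^sub>r c\<^sub>D C\<^sub>D
    by unfold_locales (use assms in auto)
  show ?thesis using rate_const_pos convergence_rate by blast
qed

end
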